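(* Let $Y_1,Y_2,\ldots$ be i.i.d. Bernoulli$(1/2)$ and let $(Z^k)_k$ be generated by the bit-drop scheme described in the context, independently of $(Y_i)$; let $L^a(k)=L^a_n(k)$ be the length of a longest common subsequence of $Z^k$ and $Y_1\ldots Y_n$. Let $\gamma>0$, let $k$ satisfy $0.45n\le k<n$, let $\sigma_k:=\sigma(Z^k_i,Y_j: i\le k,\ j\le n)$, and let $E^n_{2k}$ be the event that every $(\pi,\eta)\in M^k$ has more than $\gamma n$ non-empty matches. Then on the event $E^n_{2k}$, $$P\big(L^a(k+1)-L^a(k)=1\,\big|\,\sigma_k\big)\geq 0.5\gamma.$$
   Context: Bit-drop scheme: let $V_1,V_2,\ldots$ be i.i.d. Bernoulli$(1/2)$ and let $T_3,T_4,\ldots$ be independent, independent of $(V_k)$, with $T_{k+1}$ uniform on $\{2,\ldots,k\}$. Set $Z^2:=V_1V_2$ and, given $Z^k=Z^k_1\ldots Z^k_k$, define $Z^{k+1}_j:=Z^k_j$ for $j<T_{k+1}$, $Z^{k+1}_{T_{k+1}}:=V_{k+1}$, $Z^{k+1}_j:=Z^k_{j-1}$ for $T_{k+1}<j\le k+1$. A pair of matching subsequences of $Z^k$ and $Y_1\ldots Y_n$ of length $m$ is a pair $(\pi,\eta)$ of strictly increasing maps $\pi:\{1,\ldots,m\}\to\{1,\ldots,k\}$, $\eta:\{1,\ldots,m\}\to\{1,\ldots,n\}$ with $Z^k_{\pi(i)}=Y_{\eta(i)}$ for all $i$. $M^k_2$ is the set of such pairs of maximal length; pairs are ordered componentwise,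 and $M^k$ is the set of minimal elements of $M^k_2$. For $1\le i\le m-1$, $(\pi(i),\pi(i+1),\eta(i),\eta(i+1))$ is a match of $(\pi,\eta)$; it is non-empty if $\eta(i)+2\le\eta(i+1)$. *)

theory Defs
  imports "HOL-Probability.Probability"
begin

text \<open>Bit-drop scheme. Strings are lists; positions are 1-based as in the paper.
  bitdrop v t k is Z^k built from V_1..V_k and T_3..T_k
  (Z^1 = V_1 and Z^0 = [] are auxiliary, only k >= 2 is meaningful).\<close>
primrec bitdrop :: "(nat \<Rightarrow> 'b) \<Rightarrow> (nat \<Rightarrow> nat) \<Rightarrow> nat \<Rightarrow> 'b list" where
  "bitdrop v t 0 = []"
| "bitdrop v t (Suc k) =
     (if k < 2 then bitdrop v t k @ [v (Suc k)]
      else take (t (Suc k) - 1) (bitdrop v t k) @ [v (Suc k)] @ drop (t (Suc k) - 1) (bitdrop v t k))"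

text \<open>A pair of matching subsequences (pi, eta) of zs and ys, with pi, eta given as the lists
  of their values pi(1),...,pi(m) and eta(1),...,eta(m) (1-based positions).\<close>
definition matching :: "'b list \<Rightarrow> 'b list \<Rightarrow> nat list \<times> nat list \<Rightarrow> bool" where
  "matching zs ys pe \<longleftrightarrow>
     (let p = fst pe; q = snd pe in
       length p = length q \<and> sorted_wrt (<) p \<and> sorted_wrt (<) q \<and>
       set p \<subseteq> {1..length zs} \<and> set q \<subseteq> {1..length ys} \<and>
       (\<forall>i < length p. zs ! (p ! i - 1) = ys ! (q ! i - 1)))"

definition lcs_len :: "'b list \<Rightarrow> 'b list \<Rightarrow> nat" where
  "lcs_len zs ys = Max {length (fst pe) | pe. matching zs ys pe}"

definition M2 :: "'b list \<Rightarrow> 'b list \<Rightarrow> (nat list \<times> nat list) set" where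
  "M2 zs ys = {pe. matching zs ys pe \<and> length (fst pe) = lcs_len zs ys}"

definition pair_le :: "nat list \<times> nat list \<Rightarrow> nat list \<times> nat list \<Rightarrow> bool" where
  "pair_le a b \<longleftrightarrow> list_all2 (\<le>) (fst a) (fst b) \<and> list_all2 (\<le>) (snd a) (snd b)"

definition Mmin :: "'b list \<Rightarrow> 'b list \<Rightarrow> (nat list \<times> nat list) set" where
  "Mmin zs ys = {a \<in> M2 zs ys. \<not> (\<exists>b \<in> M2 zs ys. pair_le b a \<and> b \<noteq> a)}"

definition nonempty_matches :: "nat list \<times> nat list \<Rightarrow> nat" where
  "nonempty_matches pe = card {i. Suc i < length (snd pe) \<and> snd pe ! i + 2 \<le> snd pe ! Suc i}"

end

theory Submission
  imports Defs
begin

text \<open>Take a longest matching \<open>(\<pi>, \<eta>)\<close> of \<open>Z\<^sup>k\<close> and \<open>Y\<close> in \<open>M\<^sup>k\<close>. A non-empty match \<open>i\<close> leaves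
  the symbol of \<open>Y\<close> at position \<open>\<eta>(i) + 1\<close> unmatched, so dropping a copy of it as the new bit at
  position \<open>\<pi>(i) + 1\<close> of \<open>Z\<^sup>k\<close> extends the matching by one pair; on the other hand, inserting a
  single bit never raises the LCS by more than one. Distinct non-empty matches give distinct values
  of the pair \<open>(V\<^sub>k\<^sub>+\<^sub>1, T\<^sub>k\<^sub>+\<^sub>1)\<close>, which is uniform on \<open>{0, 1} \<times> {2..k}\<close> and independent of \<open>\<sigma>\<^sub>k\<close>.
  So on \<open>E\<^sup>n\<^sub>2\<^sub>k\<close> the conditional probability is at least \<open>\<gamma>n / (2(k - 1)) \<ge> \<gamma>/2\<close>.\<close>

section \<open>Longest common subsequences under insertion of one symbol\<close>

text \<open>Positions are 1-based: \<open>v\<close> becomes the \<open>t\<close>-th symbol, as \<open>V\<^sub>k\<^sub>+\<^sub>1\<close> becomes \<open>Z\<^sup>k\<^sup>+\<^sup>1\<^sub>T\<close> in the bit-drop scheme.\<close>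
definition insert_at :: "nat \<Rightarrow> 'b \<Rightarrow> 'b list \<Rightarrow> 'b list" where
  "insert_at t v zs = take (t - 1) zs @ v # drop (t - 1) zs"

lemma length_insert_at [simp]:
  "t \<le> Suc (length zs) \<Longrightarrow> length (insert_at t v zs) = Suc (length zs)"
  by (simp add: insert_at_def)

lemma nth_insert_at:
  assumes "t - 1 \<le> length zs" "j \<le> length zs"
  shows "insert_at t v zs ! j = (if j < t - 1 then zs ! j else if j = t - 1 then v else zs ! (j - 1))"
  using assms by (auto simp: insert_at_def nth_append min_def nth_Cons')

lemma length_bitdrop [simp]: "length (bitdrop v t k) = k"
  by (induction k) auto

lemma bitdrop_Suc_insert_at:
  "2 \<le> k \<Longrightarrow> bitdrop v t (Suc k) = insert_at (t (Suc k)) (v (Suc k)) (bitdrop v t k)"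
  by (simp add: insert_at_def)

lemma bitdrop_cong:
  "(\<And>i. 1 \<le> i \<Longrightarrow> i \<le> k \<Longrightarrow> v i = v' i) \<Longrightarrow> (\<And>i. 3 \<le> i \<Longrightarrow> i \<le> k \<Longrightarrow> t i = t' i)
   \<Longrightarrow> bitdrop v t k = bitdrop v' t' k"
  by (induction k) auto

text \<open>A matching \<open>(p, q)\<close> as the list \<open>zip p q\<close> of its matched position pairs, the form in which
  insertions and deletions are easy to state.\<close>
definition matched_pairs :: "'b list \<Rightarrow> 'b list \<Rightarrow> (nat \<times> nat) list \<Rightarrow> bool" where
  "matched_pairs zs ys ps \<longleftrightarrow>
     sorted_wrt (\<lambda>x y. fst x < fst y \<and> snd x < snd y) ps \<and>
     (\<forall>(a, b) \<in> set ps. a \<in> {1..length zs} \<and> b \<in> {1..length ys} \<and> zs ! (a - 1) = ys ! (b - 1))"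

lemma matching_iff_matched_pairs:
  "matching zs ys (p, q) \<longleftrightarrow> length p = length q \<and> matched_pairs zs ys (zip p q)"
proof
  assume "matching zs ys (p, q)"
  then have len: "length p = length q" and sorted: "sorted_wrt (<) p" "sorted_wrt (<) q"
    and range: "set p \<subseteq> {1..length zs}" "set q \<subseteq> {1..length ys}"
    and eq: "\<And>i. i < length p \<Longrightarrow> zs ! (p ! i - 1) = ys ! (q ! i - 1)"
    by (auto simp: matching_def)
  have "sorted_wrt (\<lambda>x y. fst x < fst y \<and> snd x < snd y) (zip p q)"
    using sorted len by (simp add: sorted_wrt_iff_nth_less)
  moreover have "a \<in> {1..length zs} \<and> b \<in> {1..length ys} \<and> zs ! (a - 1) = ys ! (b - 1)"
    if ab: "(a, b) \<in> set (zip p q)" for a b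
  proof -
    obtain i where "i < length p" "a = p ! i" "b = q ! i"
      using ab len by (auto simp: set_zip)
    then show ?thesis
      using range eq len nth_mem[of i p] nth_mem[of i q] by force
  qed
  ultimately show "length p = length q \<and> matched_pairs zs ys (zip p q)"
    using len by (auto simp: matched_pairs_def)
next
  assume "length p = length q \<and> matched_pairs zs ys (zip p q)"
  then have len: "length p = length q"
    and sorted: "sorted_wrt (\<lambda>x y. fst x < fst y \<and> snd x < snd y) (zip p q)"
    and pairs: "\<And>a b. (a, b) \<in> set (zip p q) \<Longrightarrow>
                   a \<in> {1..length zs} \<and> b \<in> {1..length ys} \<and> zs ! (a - 1) = ys ! (b - 1)"
    by (auto simp: matched_pairs_def)
  have "sorted_wrt (<) p" "sorted_wrt (<) q"
    using sorted len by (auto simp: sorted_wrt_iff_nth_less)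
  moreover have "set p \<subseteq> {1..length zs}" "set q \<subseteq> {1..length ys}"
    using pairs len by (auto simp: set_zip in_set_conv_nth) blast+
  moreover have "zs ! (p ! i - 1) = ys ! (q ! i - 1)" if "i < length p" for i
    using pairs[of "p ! i" "q ! i"] that len by (auto simp: set_zip)
  ultimately show "matching zs ys (p, q)"
    using len by (simp add: matching_def)
qed

lemma matching_of_matched_pairs:
  "matched_pairs zs ys ps \<Longrightarrow> matching zs ys (map fst ps, map snd ps)"
  by (simp add: matching_iff_matched_pairs zip_map_fst_snd)

lemma matching_length_le:
  assumes "matching zs ys pe"
  shows "length (fst pe) \<le> length zs"
proof -
  have "distinct (fst pe)"
    using assms by (auto simp: matching_def Let_def strict_sorted_iff)
  then have "length (fst pe) = card (set (fst pe))"
    by (simp add: distinct_card)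
  also have "\<dots> \<le> card {1..length zs}"
    using assms by (intro card_mono) (auto simp: matching_def Let_def)
  finally show ?thesis by simp
qed

lemma finite_matching_lengths: "finite {length (fst pe) | pe. matching zs ys pe}"
  by (rule finite_subset[of _ "{0..length zs}"]) (auto dest: matching_length_le)

lemma matching_length_le_lcs_len: "matching zs ys pe \<Longrightarrow> length (fst pe) \<le> lcs_len zs ys"
  unfolding lcs_len_def by (rule Max_ge[OF finite_matching_lengths]) blast

lemma lcs_len_attained: "\<exists>pe. matching zs ys pe \<and> length (fst pe) = lcs_len zs ys"
proof -
  have "matching zs ys ([], [])"
    by (simp add: matching_def)
  then have "lcs_len zs ys \<in> {length (fst pe) | pe. matching zs ys pe}"
    unfolding lcs_len_def by (intro Max_in[OF finite_matching_lengths]) auto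
  then show ?thesis by auto
qed

lemma sum_list_mono_list_all2:
  fixes xs ys :: "nat list"
  assumes "list_all2 (\<le>) xs ys"
  shows "sum_list xs \<le> sum_list ys" and "xs \<noteq> ys \<Longrightarrow> sum_list xs < sum_list ys"
  using assms by (induction rule: list_all2_induct) (auto simp: add_mono add_less_le_mono add_le_less_mono)

text \<open>An element strictly below another in \<open>pair_le\<close> has a smaller sum of positions, so a
  sum-minimal element of \<open>M2\<close> is minimal.\<close>
lemma Mmin_nonempty: "Mmin zs ys \<noteq> {}"
proof -
  define \<mu> where "\<mu> pe = sum_list (fst pe) + sum_list (snd pe)" for pe :: "nat list \<times> nat list"
  have "M2 zs ys \<noteq> {}"
    using lcs_len_attained by (auto simp: M2_def)
  then obtain pe where pe: "pe \<in> M2 zs ys" and least: "\<And>b. b \<in> M2 zs ys \<Longrightarrow> \<mu> pe \<le> \<mu> b"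
    using ex_has_least_nat[of "\<lambda>pe. pe \<in> M2 zs ys" _ \<mu>] by blast
  have "\<mu> b < \<mu> pe" if "pair_le b pe" "b \<noteq> pe" for b
    using that sum_list_mono_list_all2 unfolding pair_le_def \<mu>_def prod_eq_iff
    by (metis add_less_le_mono add_le_less_mono)
  then have "pe \<in> Mmin zs ys"
    using pe least unfolding Mmin_def by (auto simp: not_less[symmetric])
  then show ?thesis by blast
qed

text \<open>\<open>ys ! b\<close> is the symbol at position \<open>b + 1\<close>, the first one after the matched pair \<open>(a, b)\<close>;
  the second assumption says it is not matched.\<close>
lemma matched_pairs_insert_at:
  assumes mp: "matched_pairs zs ys (us @ (a, b) # ws)"
    and free: "Suc b \<le> length ys" "\<And>c d. (c, d) \<in> set ws \<Longrightarrow> Suc b < d"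
  shows "matched_pairs (insert_at (Suc a) (ys ! b) zs) ys
           (us @ (a, b) # (Suc a, Suc b) # map (apfst Suc) ws)"
proof -
  let ?zs' = "insert_at (Suc a) (ys ! b) zs"
  let ?R = "\<lambda>x y. fst x < fst y \<and> snd x < snd y"
  have sorted: "sorted_wrt ?R us" "sorted_wrt ?R ws"
    and before: "\<And>c d. (c, d) \<in> set us \<Longrightarrow> c < a \<and> d < b"
    and after: "\<And>c d. (c, d) \<in> set ws \<Longrightarrow> a < c \<and> b < d"
    and pairs: "\<And>c d. (c, d) \<in> set (us @ (a, b) # ws) \<Longrightarrow>
                   c \<in> {1..length zs} \<and> d \<in> {1..length ys} \<and> zs ! (c - 1) = ys ! (d - 1)"
    using mp by (auto simp: matched_pairs_def sorted_wrt_append)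
  have a: "1 \<le> a" "a \<le> length zs"
    using pairs[of a b] by auto
  have "sorted_wrt ?R (us @ (a, b) # (Suc a, Suc b) # map (apfst Suc) ws)"
    using sorted by (auto simp: sorted_wrt_append sorted_wrt_map dest: free(2))
      (meson before after less_SucI less_trans)+
  moreover have "c \<in> {1..Suc (length zs)} \<and> d \<in> {1..length ys} \<and> ?zs' ! (c - 1) = ys ! (d - 1)"
    if "(c, d) \<in> set us \<or> (c, d) = (a, b)" for c d
    using that pairs[of c d] a before[of c d] by (auto simp: nth_insert_at)
  moreover have "Suc c \<in> {1..Suc (length zs)} \<and> d \<in> {1..length ys} \<and> ?zs' ! c = ys ! (d - 1)"
    if "(c, d) \<in> set ws" for c d
    using that pairs[of c d] a after[of c d] by (auto simp: nth_insert_at)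
  moreover have "?zs' ! a = ys ! b"
    using a by (simp add: nth_insert_at)
  ultimately show ?thesis
    using free(1) a by (auto simp: matched_pairs_def)
qed

text \<open>Conversely, deleting the inserted symbol loses at most the one matched pair through it.\<close>
lemma matched_pairs_of_insert_at:
  assumes mp: "matched_pairs (insert_at t v zs) ys ps" and t: "t \<in> {1..Suc (length zs)}"
  obtains ps' where "matched_pairs zs ys ps'" and "length ps \<le> Suc (length ps')"
proof -
  have sorted: "sorted_wrt (\<lambda>x y. fst x < fst y \<and> snd x < snd y) ps"
    and pairs: "\<And>a b. (a, b) \<in> set ps \<Longrightarrow> a \<in> {1..Suc (length zs)} \<and> b \<in> {1..length ys}
                  \<and> insert_at t v zs ! (a - 1) = ys ! (b - 1)"
    using mp t by (auto simp: matched_pairs_def)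
  define close_gap where "close_gap a = (if t < a then a - 1 else a)" for a
  define ps' where "ps' = map (apfst close_gap) (filter (\<lambda>x. fst x \<noteq> t) ps)"
  have close_gap_mono: "close_gap a < close_gap a'" if "a < a'" "a \<noteq> t" "a' \<noteq> t" for a a'
    using that by (auto simp: close_gap_def)
  have "close_gap c \<in> {1..length zs} \<and> d \<in> {1..length ys} \<and> zs ! (close_gap c - 1) = ys ! (d - 1)"
    if "(c, d) \<in> set ps" "c \<noteq> t" for c d
    using that pairs[of c d] t by (auto simp: close_gap_def nth_insert_at split: if_split_asm)
  moreover have "sorted_wrt (\<lambda>x y. fst x < fst y \<and> snd x < snd y)
                   (map (apfst close_gap) (filter (\<lambda>x. fst x \<noteq> t) ps))"
    unfolding sorted_wrt_map
    by (rule sorted_wrt_mono_rel[OF _ sorted_wrt_filter[OF sorted]]) (auto intro: close_gap_mono)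
  ultimately have "matched_pairs zs ys ps'"
    by (auto simp: matched_pairs_def ps'_def)
  have "distinct (map fst (filter (\<lambda>x. fst x = t) ps))"
    using sorted_wrt_mono_rel[OF _ sorted, of "\<lambda>x y. fst x < fst y"]
    by (auto simp: distinct_map_filter sorted_wrt_map[symmetric] strict_sorted_iff)
  then have "length (filter (\<lambda>x. fst x = t) ps) = card (set (map fst (filter (\<lambda>x. fst x = t) ps)))"
    by (metis distinct_card length_map)
  also have "\<dots> \<le> card {t}"
    by (intro card_mono) auto
  finally have "length ps \<le> Suc (length ps')"
    using sum_length_filter_compl[of "\<lambda>x. fst x = t" ps] by (simp add: ps'_def)
  with \<open>matched_pairs zs ys ps'\<close> show thesis by (rule that)
qed

lemma lcs_len_insert_at_le:
  assumes t: "t \<in> {1..Suc (length zs)}"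
  shows "lcs_len (insert_at t v zs) ys \<le> Suc (lcs_len zs ys)"
proof -
  obtain p q where m: "matching (insert_at t v zs) ys (p, q)"
    and opt: "length p = lcs_len (insert_at t v zs) ys"
    using lcs_len_attained by (metis prod.collapse)
  then have "matched_pairs (insert_at t v zs) ys (zip p q)" and len: "length p = length q"
    by (simp_all add: matching_iff_matched_pairs)
  then obtain ps' where "matched_pairs zs ys ps'" and "length p \<le> Suc (length ps')"
    using matched_pairs_of_insert_at[OF _ t] by (metis length_zip min.idem)
  moreover have "length ps' \<le> lcs_len zs ys"
    using matching_length_le_lcs_len[OF matching_of_matched_pairs[OF \<open>matched_pairs zs ys ps'\<close>]]
    by simp
  ultimately show ?thesis
    using opt by simp
qed

text \<open>A non-empty match \<open>i\<close> of a longest matching leaves position \<open>q ! i + 1\<close> of \<open>ys\<close> unused,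
  so copying that symbol behind position \<open>p ! i\<close> of \<open>zs\<close> lengthens the matching.\<close>
lemma lcs_len_insert_at_nonempty_match:
  assumes pq: "(p, q) \<in> M2 zs ys" and i: "Suc i < length q" and gap: "q ! i + 2 \<le> q ! Suc i"
  shows "lcs_len (insert_at (Suc (p ! i)) (ys ! (q ! i)) zs) ys = Suc (lcs_len zs ys)"
proof -
  let ?ps = "zip p q"
  have m: "matching zs ys (p, q)" and opt: "length p = lcs_len zs ys"
    using pq by (auto simp: M2_def)
  then have len: "length p = length q" and mp: "matched_pairs zs ys ?ps"
    by (simp_all add: matching_iff_matched_pairs)
  have sorted_q: "sorted q" and range: "set p \<subseteq> {1..length zs}" "set q \<subseteq> {1..length ys}"
    using m by (auto simp: matching_def strict_sorted_iff)
  have split: "?ps = take i ?ps @ (p ! i, q ! i) # drop (Suc i) ?ps"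
    using i len id_take_nth_drop[of i ?ps] by simp
  have "Suc (q ! i) < d" if cd: "(c, d) \<in> set (drop (Suc i) ?ps)" for c d
  proof -
    obtain j where "d = q ! (Suc i + j)" "Suc i + j < length q"
      using cd len by (auto simp: in_set_conv_nth)
    then show ?thesis
      using gap sorted_nth_mono[OF sorted_q, of "Suc i" "Suc i + j"] by simp
  qed
  moreover have "Suc (q ! i) \<le> length ys"
    using gap range(2) nth_mem[OF i] by auto
  ultimately have "matched_pairs (insert_at (Suc (p ! i)) (ys ! (q ! i)) zs) ys
      (take i ?ps @ (p ! i, q ! i) # (Suc (p ! i), Suc (q ! i)) # map (apfst Suc) (drop (Suc i) ?ps))"
    using matched_pairs_insert_at[of zs ys "take i ?ps" "p ! i" "q ! i" "drop (Suc i) ?ps"] mp split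
    by simp
  from matching_length_le_lcs_len[OF matching_of_matched_pairs[OF this]]
  have "Suc (lcs_len zs ys) \<le> lcs_len (insert_at (Suc (p ! i)) (ys ! (q ! i)) zs) ys"
    using i len opt by simp
  moreover have "p ! i \<in> set p"
    using i len by simp
  then have "Suc (p ! i) \<in> {1..Suc (length zs)}"
    using range(1) by auto
  ultimately show ?thesis
    using lcs_len_insert_at_le by (metis le_antisym)
qed

definition lcs_raising_insertions :: "nat list \<Rightarrow> nat list \<Rightarrow> (nat \<times> nat) set" where
  "lcs_raising_insertions zs ys =
     {(v, t). v \<in> {0, 1} \<and> t \<in> {2..length zs} \<and> lcs_len (insert_at t v zs) ys = Suc (lcs_len zs ys)}"

lemma nonempty_matches_le_card_lcs_raising_insertions:
  assumes pe: "pe \<in> M2 zs ys" and binary: "set ys \<subseteq> {0, 1}"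
  shows "nonempty_matches pe \<le> card (lcs_raising_insertions zs ys)"
proof -
  obtain p q where pq: "pe = (p, q)" by fastforce
  have len: "length p = length q" and sorted_p: "sorted_wrt (<) p"
    and range: "set p \<subseteq> {1..length zs}" "set q \<subseteq> {1..length ys}"
    using pe pq by (auto simp: M2_def matching_def)
  define I where "I = {i. Suc i < length q \<and> q ! i + 2 \<le> q ! Suc i}"
  define insertion where "insertion i = (ys ! (q ! i), Suc (p ! i))" for i
  have "inj_on insertion I"
  proof
    fix i j assume "i \<in> I" "j \<in> I" "insertion i = insertion j"
    then show "i = j"
      using len sorted_p nth_eq_iff_index_eq[of p i j]
      by (auto simp: insertion_def I_def strict_sorted_iff)
  qed
  moreover have "insertion ` I \<subseteq> lcs_raising_insertions zs ys"
  proof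
    fix x assume "x \<in> insertion ` I"
    then obtain i where i: "Suc i < length q" "q ! i + 2 \<le> q ! Suc i" and x: "x = insertion i"
      by (auto simp: I_def)
    have "p ! i < p ! Suc i"
      using sorted_wrt_nth_less[OF sorted_p, of i "Suc i"] i len by simp
    then have t: "Suc (p ! i) \<in> {2..length zs}"
      using subsetD[OF range(1), of "p ! i"] subsetD[OF range(1), of "p ! Suc i"] i len by auto
    have "q ! i < length ys"
      using subsetD[OF range(2), of "q ! Suc i"] i by auto
    then have v: "ys ! (q ! i) \<in> {0, 1}"
      using binary nth_mem by blast
    show "x \<in> lcs_raising_insertions zs ys"
      using lcs_len_insert_at_nonempty_match[OF pe[unfolded pq] i] t v
      by (simp add: lcs_raising_insertions_def x insertion_def)
  qed
  moreover have "finite (lcs_raising_insertions zs ys)"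
    by (rule finite_subset[of _ "{0, 1} \<times> {2..length zs}"]) (auto simp: lcs_raising_insertions_def)
  ultimately have "card I \<le> card (lcs_raising_insertions zs ys)"
    by (intro card_inj_on_le)
  then show ?thesis
    unfolding nonempty_matches_def pq I_def by simp
qed

lemma card_lcs_raising_insertions_gt:
  assumes binary: "set ys \<subseteq> {0, 1}" and many: "\<forall>pe \<in> Mmin zs ys. c < real (nonempty_matches pe)"
  shows "c < real (card (lcs_raising_insertions zs ys))"
proof -
  obtain pe where pe: "pe \<in> Mmin zs ys"
    using Mmin_nonempty by blast
  then have "nonempty_matches pe \<le> card (lcs_raising_insertions zs ys)"
    using nonempty_matches_le_card_lcs_raising_insertions binary by (simp add: Mmin_def)
  then show ?thesis
    using many pe by (meson less_le_trans of_nat_mono)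
qed

section \<open>Conditioning on one of two independent discrete variables\<close>

lemma (in prob_space) integral_indep_var_eq_iterated:
  fixes X :: "'a \<Rightarrow> 'x::countable" and W :: "'a \<Rightarrow> 'x" and g :: "'x \<Rightarrow> 'x \<Rightarrow> real"
  assumes ind: "indep_var (count_space UNIV) X (count_space UNIV) W"
    and bound: "\<And>a w. \<bar>g a w\<bar> \<le> B"
  shows "(\<integral>x. g (X x) (W x) \<partial>M)
       = (\<integral>a. (\<integral>w. g a w \<partial>distr M (count_space UNIV) W) \<partial>distr M (count_space UNIV) X)"
proof -
  have [measurable]: "X \<in> measurable M (count_space UNIV)" "W \<in> measurable M (count_space UNIV)"
    using indep_var_rv1[OF ind] indep_var_rv2[OF ind] .
  define PX where "PX = distr M (count_space UNIV) X"
  define PW where "PW = distr M (count_space UNIV) W"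
  interpret PX: prob_space PX unfolding PX_def by (rule prob_space_distr) simp
  interpret PW: prob_space PW unfolding PW_def by (rule prob_space_distr) simp
  interpret PXW: pair_prob_space PX PW ..
  have joint: "PX \<Otimes>\<^sub>M PW = distr M (count_space UNIV) (\<lambda>x. (X x, W x))"
    using ind unfolding indep_var_distribution_eq PX_def PW_def
    by (simp add: pair_measure_countable)
  have int: "integrable (PX \<Otimes>\<^sub>M PW) (\<lambda>z. g (fst z) (snd z))"
    by (rule PXW.integrable_const_bound[where B=B]) (auto simp: joint bound)
  have "(\<integral>x. g (X x) (W x) \<partial>M) = (\<integral>z. g (fst z) (snd z) \<partial>(PX \<Otimes>\<^sub>M PW))"
    unfolding joint by (subst integral_distr) auto
  also have "\<dots> = (\<integral>a. (\<integral>w. g a w \<partial>PW) \<partial>PX)"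
    using PXW.integral_fst'[OF int] by simp
  finally show ?thesis unfolding PX_def PW_def .
qed

lemma (in prob_space) set_integral_vimage_indep_var:
  fixes X :: "'a \<Rightarrow> 'x::countable" and W :: "'a \<Rightarrow> 'x" and G :: "'x \<Rightarrow> 'x \<Rightarrow> real"
  assumes ind: "indep_var (count_space UNIV) X (count_space UNIV) W"
    and bound: "\<And>a w. \<bar>G a w\<bar> \<le> B"
  shows "(\<integral>x\<in>X -` S \<inter> space M. G (X x) (W x) \<partial>M)
       = (\<integral>x\<in>X -` S \<inter> space M. (\<integral>w. G (X x) w \<partial>distr M (count_space UNIV) W) \<partial>M)"
proof -
  have [measurable]: "X \<in> measurable M (count_space UNIV)"
    using indep_var_rv1[OF ind] .
  have "0 \<le> B"
    using order_trans[OF abs_ge_zero bound] .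
  have "(\<integral>x\<in>X -` S \<inter> space M. G (X x) (W x) \<partial>M) = (\<integral>x. indicator S (X x) * G (X x) (W x) \<partial>M)"
    unfolding set_lebesgue_integral_def
    by (rule Bochner_Integration.integral_cong) (auto simp: indicator_def)
  also have "\<dots> = (\<integral>a. (\<integral>w. indicator S a * G a w \<partial>distr M (count_space UNIV) W) \<partial>distr M (count_space UNIV) X)"
    using \<open>0 \<le> B\<close> by (intro integral_indep_var_eq_iterated[OF ind, where B=B]) (auto simp: bound indicator_def)
  also have "\<dots> = (\<integral>x. indicator S (X x) * (\<integral>w. G (X x) w \<partial>distr M (count_space UNIV) W) \<partial>M)"
    by (subst integral_distr) auto
  also have "\<dots> = (\<integral>x\<in>X -` S \<inter> space M. (\<integral>w. G (X x) w \<partial>distr M (count_space UNIV) W) \<partial>M)"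
    unfolding set_lebesgue_integral_def
    by (rule Bochner_Integration.integral_cong) (auto simp: indicator_def)
  finally show ?thesis .
qed

lemma (in prob_space) real_cond_exp_indep_var:
  fixes X :: "'a \<Rightarrow> 'x::countable" and W :: "'a \<Rightarrow> 'x" and G :: "'x \<Rightarrow> 'x \<Rightarrow> real"
  assumes ind: "indep_var (count_space UNIV) X (count_space UNIV) W"
    and bound: "\<And>a w. \<bar>G a w\<bar> \<le> B"
    and f: "\<And>x. x \<in> space M \<Longrightarrow> f x = G (X x) (W x)"
  shows "AE x in M. real_cond_exp M (vimage_algebra (space M) X (count_space UNIV)) f x
            = (\<integral>w. G (X x) w \<partial>distr M (count_space UNIV) W)"
proof -
  have [measurable]: "X \<in> measurable M (count_space UNIV)" "W \<in> measurable M (count_space UNIV)"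
    using indep_var_rv1[OF ind] indep_var_rv2[OF ind] .
  define F where "F = vimage_algebra (space M) X (count_space UNIV)"
  interpret finite_measure_subalgebra M F
    by unfold_locales (auto simp: subalgebra_def F_def sets_image_in_sets)
  define PW where "PW = distr M (count_space UNIV) W"
  interpret PW: prob_space PW unfolding PW_def by (rule prob_space_distr) simp
  define h where "h a = (\<integral>w. G a w \<partial>PW)" for a
  have h_bound: "\<bar>h a\<bar> \<le> B" for a
  proof -
    have "integrable PW (\<lambda>w. \<bar>G a w\<bar>)"
      by (rule PW.integrable_const_bound[where B=B]) (auto simp: PW_def bound)
    then have "(\<integral>w. \<bar>G a w\<bar> \<partial>PW) \<le> B"
      by (intro PW.integral_le_const) (auto simp: bound)
    then show ?thesis unfolding h_def using integral_abs_bound order_trans by blast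
  qed
  have f_meas: "f \<in> borel_measurable M"
    by (rule measurable_cong[THEN iffD2, of _ _ "\<lambda>x. G (X x) (W x)"]) (auto simp: f)
  have "AE x in M. real_cond_exp M F f x = h (X x)"
  proof (rule real_cond_exp_charact)
    show "integrable M f"
      by (rule integrable_const_bound[where B=B]) (auto simp: f f_meas bound)
    show "integrable M (\<lambda>x. h (X x))"
      by (rule integrable_const_bound[where B=B]) (auto simp: h_bound)
    show "(\<lambda>x. h (X x)) \<in> borel_measurable F"
      unfolding F_def by (rule measurable_compose[OF measurable_vimage_algebra1]) auto
    fix A assume "A \<in> sets F"
    then obtain S where A: "A = X -` S \<inter> space M"
      unfolding F_def by (subst (asm) sets_vimage_algebra2) auto
    have "(\<integral>x\<in>A. f x \<partial>M) = (\<integral>x\<in>A. G (X x) (W x) \<partial>M)"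
      unfolding A by (rule set_lebesgue_integral_cong) (auto simp: f)
    also have "\<dots> = (\<integral>x\<in>A. h (X x) \<partial>M)"
      unfolding A h_def PW_def by (rule set_integral_vimage_indep_var[OF ind bound])
    finally show "(\<integral>x\<in>A. f x \<partial>M) = (\<integral>x\<in>A. h (X x) \<partial>M)" .
  qed
  then show ?thesis unfolding F_def h_def PW_def .
qed

lemma measurable_PiM_map:
  assumes "set L \<subseteq> A"
  shows "(\<lambda>g. map g L) \<in> measurable (PiM A (\<lambda>_. count_space (UNIV :: 'c::countable set))) (count_space UNIV)"
  using assms
proof (induction L)
  case Nil
  then show ?case by simp
next
  case (Cons i L)
  have pair: "count_space UNIV \<Otimes>\<^sub>M count_space UNIV = count_space (UNIV :: ('c \<times> 'c list) set)"
    by (simp add: pair_measure_countable)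
  have "(\<lambda>g. (g i, map g L))
      \<in> measurable (PiM A (\<lambda>_. count_space (UNIV :: 'c set))) (count_space UNIV \<Otimes>\<^sub>M count_space UNIV)"
    using Cons by (intro measurable_Pair measurable_component_singleton) auto
  then have "(\<lambda>z. fst z # snd z) \<circ> (\<lambda>g. (g i, map g L))
      \<in> measurable (PiM A (\<lambda>_. count_space (UNIV :: 'c set))) (count_space UNIV)"
    unfolding pair by (rule measurable_comp) simp
  then show ?case by (simp add: comp_def)
qed

lemma measurable_PiM_finite_dependence:
  assumes "finite J" "J \<subseteq> A" and dep: "\<And>g g'. (\<And>i. i \<in> J \<Longrightarrow> g i = g' i) \<Longrightarrow> F g = F g'"
  shows "F \<in> measurable (PiM A (\<lambda>_. count_space (UNIV :: 'c::countable set))) (count_space UNIV)"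
proof -
  obtain L where L: "set L = J"
    using finite_list[OF assms(1)] by blast
  define H where "H xs = F (\<lambda>i. the (map_of (zip L xs) i))" for xs
  have "F = (\<lambda>g. H (map g L))"
    unfolding H_def by (intro ext dep) (simp add: map_of_zip_map L)
  moreover have "(\<lambda>g. H (map g L)) \<in> measurable (PiM A (\<lambda>_. count_space UNIV)) (count_space UNIV)"
    using measurable_comp[OF measurable_PiM_map[of L A], of H "count_space UNIV"] L assms(2)
    by (simp add: comp_def)
  ultimately show ?thesis by simp
qed

lemma (in prob_space) indep_var_finite_dependence:
  fixes Xs :: "'i \<Rightarrow> 'a \<Rightarrow> 'c::countable" and F F' :: "('i \<Rightarrow> 'c) \<Rightarrow> 'x"
  assumes ind: "indep_vars (\<lambda>_. count_space UNIV) Xs I"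
    and J: "finite J" "finite J'" "J \<subseteq> I" "J' \<subseteq> I" "J \<inter> J' = {}"
    and F: "\<And>g g'. (\<And>i. i \<in> J \<Longrightarrow> g i = g' i) \<Longrightarrow> F g = F g'"
    and F': "\<And>g g'. (\<And>i. i \<in> J' \<Longrightarrow> g i = g' i) \<Longrightarrow> F' g = F' g'"
  shows "indep_var (count_space UNIV) (\<lambda>\<omega>. F (\<lambda>i. Xs i \<omega>)) (count_space UNIV) (\<lambda>\<omega>. F' (\<lambda>i. Xs i \<omega>))"
proof -
  have "indep_var (count_space UNIV) (F \<circ> (\<lambda>\<omega>. restrict (\<lambda>i. Xs i \<omega>) J))
                  (count_space UNIV) (F' \<circ> (\<lambda>\<omega>. restrict (\<lambda>i. Xs i \<omega>) J'))"
    by (intro indep_var_compose[OF indep_var_restrict[OF ind J(5,3,4)]]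
        measurable_PiM_finite_dependence[OF J(1) order_refl F]
        measurable_PiM_finite_dependence[OF J(2) order_refl F'])
  moreover have "F \<circ> (\<lambda>\<omega>. restrict (\<lambda>i. Xs i \<omega>) J) = (\<lambda>\<omega>. F (\<lambda>i. Xs i \<omega>))"
    unfolding comp_def by (intro ext F) simp
  moreover have "F' \<circ> (\<lambda>\<omega>. restrict (\<lambda>i. Xs i \<omega>) J') = (\<lambda>\<omega>. F' (\<lambda>i. Xs i \<omega>))"
    unfolding comp_def by (intro ext F') simp
  ultimately show ?thesis by simp
qed

section \<open>The bit-drop model\<close>

lemma integral_uniform_insertion_lcs_raising:
  assumes "length zs = k" "2 \<le> k"
  shows "(\<integral>v. (\<integral>t. of_bool (lcs_len (insert_at t v zs) ys = Suc (lcs_len zs ys))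
            \<partial>measure_pmf (pmf_of_set {2..k})) \<partial>measure_pmf (pmf_of_set {0, 1 :: nat}))
       = card (lcs_raising_insertions zs ys) / (2 * (real k - 1))"
proof -
  let ?raises = "\<lambda>v t. lcs_len (insert_at t v zs) ys = Suc (lcs_len zs ys)"
  \<comment> \<open>\<open>B\<close> hides \<open>{0, 1}\<close> from the simplifier, which would otherwise split the sums over it.\<close>
  define B where "B = {0, 1 :: nat}"
  have B: "finite B" "B \<noteq> {}" "card B = 2"
    by (simp_all add: B_def)
  have "(\<Sum>v\<in>B. \<Sum>t\<in>{2..k}. of_bool (?raises v t))
      = (\<Sum>(v, t)\<in>B \<times> {2..k}. of_bool (?raises v t) :: real)"
    by (rule sum.cartesian_product)
  also have "\<dots> = card (B \<times> {2..k} \<inter> {x. ?raises (fst x) (snd x)})"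
    using B(1) by (simp add: case_prod_beta')
  also have "B \<times> {2..k} \<inter> {x. ?raises (fst x) (snd x)} = lcs_raising_insertions zs ys"
    using assms(1) by (auto simp: lcs_raising_insertions_def B_def)
  finally show ?thesis
    unfolding B_def[symmetric]
    using assms(2) B by (simp add: integral_pmf_of_set sum_divide_distrib[symmetric] of_nat_diff field_simps)
qed

locale bitdrop_model = prob_space M for M :: "'a measure" +
  fixes V Y T :: "nat \<Rightarrow> 'a \<Rightarrow> nat"
  assumes indep: "indep_vars (\<lambda>_. count_space UNIV) (case_sum V (case_sum Y T))
                   (Inl ` {1..} \<union> Inr ` Inl ` {1..} \<union> Inr ` Inr ` {3..})"
    and distV: "\<And>i. i \<ge> 1 \<Longrightarrow> distr M (count_space UNIV) (V i) = measure_pmf (pmf_of_set {0, 1})"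
    and distY: "\<And>j. j \<ge> 1 \<Longrightarrow> distr M (count_space UNIV) (Y j) = measure_pmf (pmf_of_set {0, 1})"
    and distT: "\<And>m. m \<ge> 2 \<Longrightarrow> distr M (count_space UNIV) (T (Suc m)) = measure_pmf (pmf_of_set {2..m})"
begin

abbreviation Z :: "nat \<Rightarrow> 'a \<Rightarrow> nat list" where
  "Z k x \<equiv> bitdrop (\<lambda>i. V i x) (\<lambda>i. T i x) k"

abbreviation Ys :: "nat \<Rightarrow> 'a \<Rightarrow> nat list" where
  "Ys n x \<equiv> map (\<lambda>j. Y j x) [1..<Suc n]"

lemma AE_Ys_binary: "AE x in M. set (Ys n x) \<subseteq> {0, 1}"
proof -
  have "AE x in M. Y j x \<in> {0, 1}" if j: "1 \<le> j" for j
  proof (rule AE_distrD[of "Y j"])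
    show "Y j \<in> measurable M (count_space UNIV)"
      using indep j unfolding indep_vars_def by force
    show "AE y in distr M (count_space UNIV) (Y j). y \<in> {0, 1}"
      unfolding distY[OF j] by (simp add: AE_measure_pmf_iff)
  qed
  then have "AE x in M. \<forall>j \<in> set [1..<Suc n]. Y j x \<in> {0, 1}"
    by (subst AE_finite_all) auto
  then show ?thesis
    by eventually_elim auto
qed

lemma indep_var_state_next_bit:
  assumes k: "2 \<le> k"
  shows "indep_var (count_space UNIV) (\<lambda>x. (Z k x, Ys n x)) (count_space UNIV) (\<lambda>x. ([V (Suc k) x], [T (Suc k) x]))"
    and "indep_var (count_space UNIV) (V (Suc k)) (count_space UNIV) (T (Suc k))"
proof -
  let ?Xs = "case_sum V (case_sum Y T)"
  define J where "J = (Inl ` {1..k} \<union> Inr ` Inl ` {1..n} \<union> Inr ` Inr ` {3..k} :: (nat + nat + nat) set)"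
  have "indep_var (count_space UNIV)
          (\<lambda>\<omega>. (\<lambda>g. (bitdrop (\<lambda>i. g (Inl i)) (\<lambda>i. g (Inr (Inr i))) k, map (\<lambda>j. g (Inr (Inl j))) [1..<Suc n]))
                 (\<lambda>i. ?Xs i \<omega>))
          (count_space UNIV) (\<lambda>\<omega>. (\<lambda>g. ([g (Inl (Suc k))], [g (Inr (Inr (Suc k)))])) (\<lambda>i. ?Xs i \<omega>))"
  proof (rule indep_var_finite_dependence[OF indep, of J "{Inl (Suc k), Inr (Inr (Suc k))}"])
    fix g g' :: "nat + nat + nat \<Rightarrow> nat"
    assume "\<And>i. i \<in> J \<Longrightarrow> g i = g' i"
    then show "(bitdrop (\<lambda>i. g (Inl i)) (\<lambda>i. g (Inr (Inr i))) k, map (\<lambda>j. g (Inr (Inl j))) [1..<Suc n])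
             = (bitdrop (\<lambda>i. g' (Inl i)) (\<lambda>i. g' (Inr (Inr i))) k, map (\<lambda>j. g' (Inr (Inl j))) [1..<Suc n])"
      by (auto simp: J_def intro!: bitdrop_cong)
  qed (use k in \<open>auto simp: J_def\<close>)
  then show "indep_var (count_space UNIV) (\<lambda>x. (Z k x, Ys n x)) (count_space UNIV) (\<lambda>x. ([V (Suc k) x], [T (Suc k) x]))"
    by simp
  have "indep_var (count_space UNIV) (\<lambda>\<omega>. (\<lambda>g. g (Inl (Suc k))) (\<lambda>i. ?Xs i \<omega>))
                  (count_space UNIV) (\<lambda>\<omega>. (\<lambda>g. g (Inr (Inr (Suc k)))) (\<lambda>i. ?Xs i \<omega>))"
    using k by (intro indep_var_finite_dependence[OF indep, of "{Inl (Suc k)}" "{Inr (Inr (Suc k))}"]) auto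
  then show "indep_var (count_space UNIV) (V (Suc k)) (count_space UNIV) (T (Suc k))"
    by simp
qed

lemma prob_next_bit_raises_lcs:
  assumes k: "2 \<le> k" and "length zs = k"
  shows "(\<integral>x. of_bool (lcs_len (insert_at (T (Suc k) x) (V (Suc k) x) zs) ys = Suc (lcs_len zs ys)) \<partial>M)
       = card (lcs_raising_insertions zs ys) / (2 * (real k - 1))"
proof -
  have "(\<integral>x. of_bool (lcs_len (insert_at (T (Suc k) x) (V (Suc k) x) zs) ys = Suc (lcs_len zs ys)) \<partial>M)
      = (\<integral>v. (\<integral>t. of_bool (lcs_len (insert_at t v zs) ys = Suc (lcs_len zs ys))
                  \<partial>distr M (count_space UNIV) (T (Suc k))) \<partial>distr M (count_space UNIV) (V (Suc k)) :: real)"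
    using integral_indep_var_eq_iterated[OF indep_var_state_next_bit(2)[OF k], where B=1
        and g="\<lambda>v t. of_bool (lcs_len (insert_at t v zs) ys = Suc (lcs_len zs ys))"]
    by simp
  also have "\<dots> = card (lcs_raising_insertions zs ys) / (2 * (real k - 1))"
    using integral_uniform_insertion_lcs_raising[OF assms(2) k] distV[of "Suc k"] distT[OF k] by simp
  finally show ?thesis .
qed

lemma cond_prob_lcs_increment:
  assumes k: "2 \<le> k"
  shows "AE x in M.
           real_cond_exp M (vimage_algebra (space M) (\<lambda>x. (Z k x, Ys n x)) (count_space UNIV))
             (indicator {x \<in> space M. int (lcs_len (Z (Suc k) x) (Ys n x)) - int (lcs_len (Z k x) (Ys n x)) = 1}) x
           = card (lcs_raising_insertions (Z k x) (Ys n x)) / (2 * (real k - 1))"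
proof -
  define X where "X x = (Z k x, Ys n x)" for x
  \<comment> \<open>\<open>indep_var\<close> needs both variables in one type, so the new bit and its position are
    packed like the state.\<close>
  define W where "W x = ([V (Suc k) x], [T (Suc k) x])" for x
  define G :: "nat list \<times> nat list \<Rightarrow> nat list \<times> nat list \<Rightarrow> real" where
    "G a w = of_bool (lcs_len (insert_at (hd (snd w)) (hd (fst w)) (fst a)) (snd a) = Suc (lcs_len (fst a) (snd a)))"
    for a w
  have indXW: "indep_var (count_space UNIV) X (count_space UNIV) W"
    using indep_var_state_next_bit(1)[OF k, of n] unfolding X_def W_def .
  have "int (lcs_len (Z (Suc k) x) (Ys n x)) - int (lcs_len (Z k x) (Ys n x)) = 1 \<longleftrightarrow> G (X x) (W x) = 1" for x
    using k by (simp add: G_def X_def W_def bitdrop_Suc_insert_at del: bitdrop.simps upt_Suc) arith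
  then have cond_exp: "AE x in M.
      real_cond_exp M (vimage_algebra (space M) X (count_space UNIV))
        (indicator {x \<in> space M. int (lcs_len (Z (Suc k) x) (Ys n x)) - int (lcs_len (Z k x) (Ys n x)) = 1}) x
      = (\<integral>w. G (X x) w \<partial>distr M (count_space UNIV) W)"
    by (intro real_cond_exp_indep_var[OF indXW, where B=1]) (auto simp: G_def indicator_def)
  have [measurable]: "W \<in> measurable M (count_space UNIV)"
    using indep_var_rv2[OF indXW] .
  have integral: "(\<integral>w. G a w \<partial>distr M (count_space UNIV) W)
      = card (lcs_raising_insertions (fst a) (snd a)) / (2 * (real k - 1))"
    if "length (fst a) = k" for a
    using prob_next_bit_raises_lcs[OF k that] by (simp add: integral_distr G_def W_def)
  show ?thesis
    using cond_exp
  proof eventually_elim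
    case (elim x)
    have "length (fst (X x)) = k"
      by (simp add: X_def)
    from elim integral[OF this] show ?case
      unfolding X_def by (simp only: fst_conv snd_conv)
  qed
qed

end

theorem lemma12:
  fixes M :: "'a measure"
    and V Y T :: "nat \<Rightarrow> 'a \<Rightarrow> nat"
    and \<gamma> :: real and n k :: nat
  assumes "prob_space M"
    and indep: "prob_space.indep_vars M (\<lambda>_. count_space UNIV) (case_sum V (case_sum Y T))
                 (Inl ` {1..} \<union> Inr ` Inl ` {1..} \<union> Inr ` Inr ` {3..})"
    and distV: "\<And>i. i \<ge> 1 \<Longrightarrow> distr M (count_space UNIV) (V i) = measure_pmf (pmf_of_set {0,1})"
    and distY: "\<And>j. j \<ge> 1 \<Longrightarrow> distr M (count_space UNIV) (Y j) = measure_pmf (pmf_of_set {0,1})"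
    and distT: "\<And>m. m \<ge> 2 \<Longrightarrow> distr M (count_space UNIV) (T (Suc m)) = measure_pmf (pmf_of_set {2..m})"
    and "\<gamma> > 0"
    and "(45/100) * real n \<le> real k" and "k < n" and "2 \<le> k"
  shows "AE x in M.
           (\<forall>pe \<in> Mmin (bitdrop (\<lambda>i. V i x) (\<lambda>i. T i x) k) (map (\<lambda>j. Y j x) [1..<Suc n]).
               real (nonempty_matches pe) > \<gamma> * real n)
           \<longrightarrow> real_cond_exp M
                 (vimage_algebra (space M)
                    (\<lambda>x. (bitdrop (\<lambda>i. V i x) (\<lambda>i. T i x) k, map (\<lambda>j. Y j x) [1..<Suc n]))
                    (count_space UNIV))
                 (indicator {x \<in> space M.
                    int (lcs_len (bitdrop (\<lambda>i. V i x) (\<lambda>i. T i x) (Suc k)) (map (\<lambda>j. Y j x) [1..<Suc n]))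
                    - int (lcs_len (bitdrop (\<lambda>i. V i x) (\<lambda>i. T i x) k) (map (\<lambda>j. Y j x) [1..<Suc n])) = 1})
                 x \<ge> 0.5 * \<gamma>"
proof -
  interpret bitdrop_model M V Y T
    by (intro bitdrop_model.intro bitdrop_model_axioms.intro) (use assms in auto)
  show ?thesis
    using AE_Ys_binary[of n] cond_prob_lcs_increment[OF \<open>2 \<le> k\<close>, of n]
  proof eventually_elim
    case (elim x)
    have "\<gamma> * (real k - 1) < card (lcs_raising_insertions (Z k x) (Ys n x))"
      if "\<forall>pe \<in> Mmin (Z k x) (Ys n x). real (nonempty_matches pe) > \<gamma> * real n"
    proof -
      have "\<gamma> * real n < card (lcs_raising_insertions (Z k x) (Ys n x))"
        using card_lcs_raising_insertions_gt elim(1) that by blast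
      moreover have "\<gamma> * (real k - 1) \<le> \<gamma> * real n"
        using \<open>\<gamma> > 0\<close> \<open>k < n\<close> by simp
      ultimately show ?thesis by linarith
    qed
    moreover have "0.5 * \<gamma> \<le> c / (2 * (real k - 1))" if "\<gamma> * (real k - 1) < c" for c
      using that \<open>2 \<le> k\<close> by (simp add: field_simps)
    ultimately show ?case
      unfolding elim(2) by blast
  qed
qed

end
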